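(* Let $k=4$, $r\ge 2$, $d=2^r$, $n\ge d$ and $i=n-d$. Then in $\mathbb{F}_2[w_2,w_3,w_4]$, \[ \beta_3^{i-1}q_n+w_4\beta_3^{i-2}q_{n-1}+\big(w_2\beta_3^{i-1}+w_4^2\beta_3^{i-3}\big)q_{n-2}+\beta_3^iq_{n-3}=0, \] a homogeneous relation of degree $(d-3)+4i$, where $\beta_3^0=1$, $\beta_3^m=0$ for $m<0$, and $\beta_3^{m+1}=w_3\beta_3^m+w_2w_4\beta_3^{m-1}+w_4^3\beta_3^{m-3}$ for $m\ge 0$.
   Context: In $\mathbb{F}_2[w_2,w_3,w_4]$ ($\deg w_i=i$), $q_0=1$, $q_m=0$ for $m<0$, and $q_m=w_2q_{m-2}+w_3q_{m-3}+w_4q_{m-4}$ for $m\ge1$. *)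

theory Defs
  imports "HOL-Library.Z2" "HOL-Computational_Algebra.Polynomial"
begin

text \<open>The ring F_2[w2,w3,w4], realised as iterated univariate polynomials
  ((F_2[w2])[w3])[w4]; the type bit is the field with two elements.\<close>

type_synonym R = "bit poly poly poly"

definition w2 :: R where "w2 = [:[:[:0, 1:]:]:]"
definition w3 :: R where "w3 = [:[:0, 1:]:]"
definition w4 :: R where "w4 = [:0, 1:]"

fun qn :: "nat \<Rightarrow> R" where
  "qn m = (if m = 0 then 1 else
     (if m \<ge> 2 then w2 * qn (m - 2) else 0) +
     (if m \<ge> 3 then w3 * qn (m - 3) else 0) +
     (if m \<ge> 4 then w4 * qn (m - 4) else 0))"

definition q :: "int \<Rightarrow> R" where
  "q m = (if m < 0 then 0 else qn (nat m))"

fun betan :: "nat \<Rightarrow> R" where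
  "betan 0 = 1"
| "betan (Suc m) = w3 * betan m +
     (if m \<ge> 1 then w2 * w4 * betan (m - 1) else 0) +
     (if m \<ge> 3 then w4 ^ 3 * betan (m - 3) else 0)"

definition beta3 :: "int \<Rightarrow> R" where
  "beta3 m = (if m < 0 then 0 else betan (nat m))"

end

theory Submission
  imports Defs
begin

text \<open>Let L(i, m) be the left-hand side with q_n replaced by q_m. Over F_2 the recurrences
  for beta_3 and q give L(i + 1, m + 1) = w_4 L(i, m), and L(0, m) = q_(m-3); hence
  L(i, d + i) = w_4^i q_(d-3). Since squaring is additive in characteristic 2, the recurrence
  for q yields q_(2k+1) = w_3 q_(k-1)^2, so q_(2^r - 3) = 0 follows from q_1 = 0 by induction
  on r.\<close>

lemma two_R_eq_0: "(2::R) = 0"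
  by (simp add: numeral_poly)

lemma power2_add_char2:
  fixes a b :: "'a::comm_ring_1"
  assumes "(2::'a) = 0"
  shows "(a + b)\<^sup>2 = a\<^sup>2 + b\<^sup>2"
proof -
  have "(a + b)\<^sup>2 = a\<^sup>2 + b\<^sup>2 + 2 * (a * b)"
    by (simp add: power2_eq_square algebra_simps)
  with assms show ?thesis by simp
qed

lemma q_neg: "m < 0 \<Longrightarrow> q m = 0"
  by (simp add: q_def)

lemma q_0: "q 0 = 1"
  by (simp add: q_def)

lemma q_rec: "m \<ge> 1 \<Longrightarrow> q m = w2 * q (m - 2) + w3 * q (m - 3) + w4 * q (m - 4)"
  by (auto simp: q_def nat_diff_distrib)

lemma q_doubling:
  "q (2 * k) = (q k)\<^sup>2 + w2 * (q (k - 1))\<^sup>2 + w4 * (q (k - 2))\<^sup>2 \<and>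
   q (2 * k + 1) = w3 * (q (k - 1))\<^sup>2"
proof (induction "nat (k + 2)" arbitrary: k rule: less_induct)
  case less
  consider "k < 0" | "k = 0" | "k \<ge> 1" by linarith
  then show ?case
  proof cases
    case 1
    then show ?thesis by (simp add: q_neg)
  next
    case 2
    then show ?thesis by (simp add: q_0 q_neg q_rec)
  next
    case 3
    have IH1: "q (2 * k - 2) = (q (k - 1))\<^sup>2 + w2 * (q (k - 2))\<^sup>2 + w4 * (q (k - 3))\<^sup>2"
              "q (2 * k - 1) = w3 * (q (k - 2))\<^sup>2"
      using less[of "k - 1"] 3 by (simp_all add: algebra_simps)
    have IH2: "q (2 * k - 4) = (q (k - 2))\<^sup>2 + w2 * (q (k - 3))\<^sup>2 + w4 * (q (k - 4))\<^sup>2"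
              "q (2 * k - 3) = w3 * (q (k - 3))\<^sup>2"
      using less[of "k - 2"] 3 by (simp_all add: algebra_simps)
    have "(q k)\<^sup>2 = w2\<^sup>2 * (q (k - 2))\<^sup>2 + w3\<^sup>2 * (q (k - 3))\<^sup>2 + w4\<^sup>2 * (q (k - 4))\<^sup>2"
      using q_rec[of k] 3 by (simp add: power2_add_char2 two_R_eq_0 power_mult_distrib)
    moreover have "q (2 * k) = w2 * q (2 * k - 2) + w3 * q (2 * k - 3) + w4 * q (2 * k - 4)"
      using q_rec[of "2 * k"] 3 by simp
    ultimately have "q (2 * k) = (q k)\<^sup>2 + w2 * (q (k - 1))\<^sup>2 + w4 * (q (k - 2))\<^sup>2
        + 2 * (w2 * w4 * (q (k - 3))\<^sup>2)"
      unfolding IH1 IH2 by algebra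
    moreover have "q (2 * k + 1) = w2 * q (2 * k - 1) + w3 * q (2 * k - 2) + w4 * q (2 * k - 3)"
      using q_rec[of "2 * k + 1"] 3 by simp
    then have "q (2 * k + 1) = w3 * (q (k - 1))\<^sup>2
        + 2 * (w2 * w3 * (q (k - 2))\<^sup>2 + w3 * w4 * (q (k - 3))\<^sup>2)"
      unfolding IH1 IH2 by algebra
    ultimately show ?thesis by (simp add: two_R_eq_0)
  qed
qed

lemma q_two_power_minus_3: "r \<ge> 2 \<Longrightarrow> q (2 ^ r - 3) = 0"
proof (induction r rule: dec_induct)
  case base
  show ?case by (simp add: q_rec q_neg)
next
  case (step r)
  have "(2::int) ^ Suc r - 3 = 2 * (2 ^ r - 2) + 1" by simp
  then have "q (2 ^ Suc r - 3) = w3 * (q (2 ^ r - 3))\<^sup>2"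
    using q_doubling[of "2 ^ r - 2"] by simp
  with step.IH show ?case by simp
qed

lemma beta3_neg: "m < 0 \<Longrightarrow> beta3 m = 0"
  by (simp add: beta3_def)

lemma beta3_0: "beta3 0 = 1"
  by (simp add: beta3_def)

lemma beta3_rec:
  "m \<ge> 0 \<Longrightarrow> beta3 (m + 1) = w3 * beta3 m + w2 * w4 * beta3 (m - 1) + w4 ^ 3 * beta3 (m - 3)"
  by (auto simp: beta3_def nat_add_distrib nat_diff_distrib)

definition beta3_q_relation :: "int \<Rightarrow> int \<Rightarrow> R" where
  "beta3_q_relation i m =
     beta3 (i - 1) * q m + w4 * beta3 (i - 2) * q (m - 1)
     + (w2 * beta3 (i - 1) + w4 ^ 2 * beta3 (i - 3)) * q (m - 2)
     + beta3 i * q (m - 3)"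

lemma beta3_q_relation_0: "beta3_q_relation 0 m = q (m - 3)"
  by (simp add: beta3_q_relation_def beta3_neg beta3_0)

lemma beta3_q_relation_step:
  assumes "i \<ge> 0" and "m \<ge> 0"
  shows "beta3_q_relation (i + 1) (m + 1) = w4 * beta3_q_relation i m"
proof -
  have "beta3_q_relation (i + 1) (m + 1) =
      beta3 i * q (m + 1) + w4 * beta3 (i - 1) * q m
      + (w2 * beta3 i + w4 ^ 2 * beta3 (i - 2)) * q (m - 1)
      + beta3 (i + 1) * q (m - 2)"
    by (simp add: beta3_q_relation_def algebra_simps)
  also have "\<dots> = w4 * beta3_q_relation i m
      + 2 * (w2 * beta3 i * q (m - 1) + w3 * beta3 i * q (m - 2))"
    unfolding beta3_rec[OF assms(1)] q_rec[of "m + 1", simplified, OF assms(2)]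
      beta3_q_relation_def
    by algebra
  finally show ?thesis by (simp add: two_R_eq_0)
qed

lemma beta3_q_relation_eq:
  assumes "0 \<le> i" and "i \<le> m"
  shows "beta3_q_relation i m = w4 ^ nat i * q (m - i - 3)"
  using assms
proof (induction i arbitrary: m rule: int_ge_induct)
  case base
  show ?case by (simp add: beta3_q_relation_0)
next
  case (step i)
  have "beta3_q_relation (i + 1) m = w4 * beta3_q_relation i (m - 1)"
    using beta3_q_relation_step[of i "m - 1"] step.hyps step.prems by simp
  also have "\<dots> = w4 ^ nat (i + 1) * q (m - (i + 1) - 3)"
    using step.IH[of "m - 1"] step.prems step.hyps by (simp add: nat_add_distrib)
  finally show ?case .
qed

theorem mainTheorem13:
  fixes r n :: nat and d i :: int
  assumes "r \<ge> 2" and "d = 2 ^ r" and "int n \<ge> d" and "i = int n - d"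
  shows "beta3 (i - 1) * q (int n) + w4 * beta3 (i - 2) * q (int n - 1)
         + (w2 * beta3 (i - 1) + w4 ^ 2 * beta3 (i - 3)) * q (int n - 2)
         + beta3 i * q (int n - 3) = 0"
proof -
  have "0 \<le> i" and "i \<le> int n" and "int n - i - 3 = 2 ^ r - 3"
    using assms by auto
  then have "beta3_q_relation i (int n) = w4 ^ nat i * q (2 ^ r - 3)"
    using beta3_q_relation_eq by simp
  then show ?thesis
    by (simp add: beta3_q_relation_def q_two_power_minus_3 assms(1))
qed

end
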